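(* Let $X$ be a random variable on a probability space with $X \ge 0$ almost surely and $X \in L^2$ (i.e. $E X^2 < \infty$). Let $0 < r < s \le 1$. Then $$\operatorname{Var}(X^r)^{1/r} \le \operatorname{Var}(X^s)^{1/s}.$$
   Context: $\operatorname{Var}(Y) = E(Y^2) - (EY)^2$ denotes the variance of a square-integrable random variable $Y$. Statements such as $X\ge 0$ are meant almost surely. *)

theory Defs
  imports "HOL-Probability.Probability"
begin

end

theory Submission imports Defs begin

text \<open>
  Put \<open>Y = X\<^sup>s\<close> and \<open>t = r / s \<in> (0, 1)\<close>, so that \<open>X\<^sup>r = Y\<^sup>t\<close>; it suffices to show
  \<open>Var(Y\<^sup>t) \<le> Var(Y)\<^sup>t\<close>. With \<open>m = E Y\<close>, the variance of \<open>Y\<^sup>t\<close> is at most its mean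
  square deviation from \<open>m\<^sup>t\<close>; since \<open>\<bar>a\<^sup>t - b\<^sup>t\<bar> \<le> \<bar>a - b\<bar>\<^sup>t\<close> for \<open>a, b \<ge> 0\<close>,
  \<open>(Y\<^sup>t - m\<^sup>t)\<^sup>2 \<le> ((Y - m)\<^sup>2)\<^sup>t\<close>; and by Jensen's inequality for the concave map
  \<open>u \<mapsto> u\<^sup>t\<close>, \<open>E(((Y - m)\<^sup>2)\<^sup>t) \<le> (E (Y - m)\<^sup>2)\<^sup>t = Var(Y)\<^sup>t\<close>.
\<close>

lemma powr_add_le_add_powr:
  fixes a b t :: real
  assumes "0 \<le> a" "0 \<le> b" "0 < t" "t \<le> 1"
  shows "(a + b) powr t \<le> a powr t + b powr t"
proof (cases "a + b = 0")
  case True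
  then show ?thesis using assms by auto
next
  case False
  then have ab: "a + b > 0" using assms by auto
  have frac_le: "c / (a + b) \<le> c powr t / (a + b) powr t" if "0 \<le> c" "c \<le> a + b" for c
  proof -
    have "c / (a + b) \<le> (c / (a + b)) powr t"
      using that ab assms powr_mono'[of t 1 "c / (a + b)"] by simp
    then show ?thesis using that ab by (simp add: powr_divide)
  qed
  have "1 = a / (a + b) + b / (a + b)"
    using ab by (simp add: add_divide_distrib[symmetric])
  also have "\<dots> \<le> a powr t / (a + b) powr t + b powr t / (a + b) powr t"
    using assms by (intro add_mono frac_le) auto
  also have "\<dots> = (a powr t + b powr t) / (a + b) powr t"
    by (simp add: add_divide_distrib)
  finally show ?thesis using ab by (simp add: le_divide_eq)
qed

lemma abs_powr_diff_le:
  fixes a b t :: real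
  assumes "0 \<le> a" "0 \<le> b" "0 < t" "t \<le> 1"
  shows "\<bar>a powr t - b powr t\<bar> \<le> \<bar>a - b\<bar> powr t"
proof -
  have "\<bar>a powr t - b powr t\<bar> \<le> \<bar>a - b\<bar> powr t" if "0 \<le> b" "b \<le> a" for a b
  proof -
    have "a powr t = ((a - b) + b) powr t" by simp
    also have "\<dots> \<le> (a - b) powr t + b powr t"
      using that assms by (intro powr_add_le_add_powr) auto
    finally show ?thesis using that assms powr_mono2[of t b a] by auto
  qed
  from this[of b a] this[of a b] assms show ?thesis
    by (cases "b \<le> a") (auto simp: abs_minus_commute)
qed

lemma powr_le_one_plus_powr:
  fixes x p q :: real
  assumes "0 \<le> x" "0 \<le> p" "p \<le> q"
  shows "x powr p \<le> 1 + x powr q"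
proof (cases "x \<le> 1")
  case True
  then have "x powr p \<le> 1" using assms by (intro powr_le1) auto
  then show ?thesis by (smt (verit) powr_ge_zero)
next
  case False
  then have "x powr p \<le> x powr q" using assms by (intro powr_mono) auto
  then show ?thesis by (smt (verit) powr_ge_zero)
qed

lemma (in finite_measure) integrable_powr_of_integrable:
  fixes U :: "'a \<Rightarrow> real"
  assumes "integrable M U" "AE x in M. U x \<ge> 0" "0 \<le> p" "p \<le> 1"
  shows "integrable M (\<lambda>x. U x powr p)"
proof (rule Bochner_Integration.integrable_bound[where f = "\<lambda>x. 1 + U x"])
  show "integrable M (\<lambda>x. 1 + U x)" using assms by auto
  show "(\<lambda>x. U x powr p) \<in> borel_measurable M" using assms(1) by measurable
  show "AE x in M. norm (U x powr p) \<le> norm (1 + U x)"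
    using assms(2) by eventually_elim (use assms powr_le_one_plus_powr[of _ p 1] in auto)
qed

lemma (in finite_measure) integrable_powr_of_square_integrable:
  fixes X :: "'a \<Rightarrow> real"
  assumes "X \<in> borel_measurable M" "AE x in M. X x \<ge> 0" "integrable M (\<lambda>x. (X x)\<^sup>2)"
    and "0 \<le> p" "p \<le> 2"
  shows "integrable M (\<lambda>x. X x powr p)"
proof -
  have "integrable M (\<lambda>x. ((X x)\<^sup>2) powr (p / 2))"
    using assms by (intro integrable_powr_of_integrable) auto
  moreover have "AE x in M. ((X x)\<^sup>2) powr (p / 2) = X x powr p"
    using assms(2) by eventually_elim (simp add: powr_powr flip: powr_numeral)
  ultimately show ?thesis
    using assms(1) by (subst integrable_cong_AE[symmetric]) auto
qed

lemma (in prob_space) variance_le_mean_square_deviation: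
  fixes Z :: "'a \<Rightarrow> real"
  assumes "integrable M Z" "integrable M (\<lambda>x. (Z x)\<^sup>2)"
  shows "variance Z \<le> expectation (\<lambda>x. (Z x - a)\<^sup>2)"
proof -
  have "expectation (\<lambda>x. (Z x - a)\<^sup>2) = expectation (\<lambda>x. (Z x)\<^sup>2 + a\<^sup>2 - 2 * Z x * a)"
    by (simp add: power2_diff)
  also have "\<dots> = expectation (\<lambda>x. (Z x)\<^sup>2) + a\<^sup>2 - 2 * expectation Z * a"
    using assms prob_space by simp
  also have "\<dots> = variance Z + (expectation Z - a)\<^sup>2"
    using variance_eq[OF assms] by (simp add: power2_diff)
  finally show ?thesis by simp
qed

lemma (in prob_space) expectation_powr_le_powr_expectation:
  fixes U :: "'a \<Rightarrow> real"
  assumes U: "integrable M U" "AE x in M. U x \<ge> 0" and t: "0 < t" "t \<le> 1"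
  shows "expectation (\<lambda>x. U x powr t) \<le> expectation U powr t"
proof -
  have U_powr: "integrable M (\<lambda>x. U x powr t)"
    using U t by (intro integrable_powr_of_integrable) auto
  define V where "V = expectation U"
  have "0 \<le> V" unfolding V_def using U by (intro integral_nonneg_AE) auto
  show ?thesis
  proof (cases "V = 0")
    case True
    then have "AE x in M. U x = 0"
      using integral_nonneg_eq_0_iff_AE[OF U(1,2)] by (simp add: V_def)
    then have "AE x in M. U x powr t = 0" by eventually_elim simp
    then show ?thesis by (simp add: integral_eq_zero_AE)
  next
    case False
    with \<open>0 \<le> V\<close> have V: "V > 0" by simp
    \<comment> \<open>Weighted AM-GM, \<open>u\<^sup>t V\<^sup>1\<^sup>-\<^sup>t \<le> t u + (1 - t) V\<close>, averaged over \<open>u = U x\<close>.\<close>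
    have young: "U x powr t * V powr (1 - t) \<le> t * U x + (1 - t) * V" if "U x \<ge> 0" for x
      using that V t Youngs_inequality_0[of t "1 - t" "U x" V] by (cases "U x = 0") auto
    have "expectation (\<lambda>x. U x powr t) * V powr (1 - t)
          = expectation (\<lambda>x. U x powr t * V powr (1 - t))" by simp
    also have "\<dots> \<le> expectation (\<lambda>x. t * U x + (1 - t) * V)"
      using U U_powr young by (intro integral_mono_AE) auto
    also have "\<dots> = t * V + (1 - t) * V"
      using U prob_space by (simp add: V_def)
    also have "\<dots> = V powr t * V powr (1 - t)"
      using V by (simp add: algebra_simps flip: powr_add)
    finally show ?thesis using V by (simp add: V_def)
  qed
qed

lemma (in prob_space) variance_powr_le_powr_variance:
  fixes Y :: "'a \<Rightarrow> real"
  assumes Y: "Y \<in> borel_measurable M" "AE x in M. Y x \<ge> 0" "integrable M (\<lambda>x. (Y x)\<^sup>2)"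
    and t: "0 < t" "t \<le> 1"
  shows "variance (\<lambda>x. Y x powr t) \<le> variance Y powr t"
proof -
  define m where "m = expectation Y"
  have Y_int: "integrable M Y"
    using Y(1,3) by (rule square_integrable_imp_integrable)
  have "0 \<le> m" unfolding m_def using Y by (intro integral_nonneg_AE) auto
  have Yt_int: "integrable M (\<lambda>x. Y x powr t)"
    using Y t by (intro integrable_powr_of_square_integrable) auto
  have Yt_sq_int: "integrable M (\<lambda>x. (Y x powr t)\<^sup>2)"
    using integrable_powr_of_square_integrable[OF Y, of "2 * t"] t
    by (simp add: power2_eq_square flip: powr_add)
  have dev_int: "integrable M (\<lambda>x. (Y x - m)\<^sup>2)"
    using Y Y_int by (simp add: power2_diff)
  have "variance (\<lambda>x. Y x powr t) \<le> expectation (\<lambda>x. (Y x powr t - m powr t)\<^sup>2)"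
    using Yt_int Yt_sq_int by (rule variance_le_mean_square_deviation)
  also have "\<dots> \<le> expectation (\<lambda>x. ((Y x - m)\<^sup>2) powr t)"
  proof (rule integral_mono_AE)
    show "integrable M (\<lambda>x. (Y x powr t - m powr t)\<^sup>2)"
      using Yt_int Yt_sq_int by (simp add: power2_diff)
    show "integrable M (\<lambda>x. ((Y x - m)\<^sup>2) powr t)"
      using dev_int t by (intro integrable_powr_of_integrable) auto
    show "AE x in M. (Y x powr t - m powr t)\<^sup>2 \<le> ((Y x - m)\<^sup>2) powr t"
      using Y(2)
    proof eventually_elim
      case (elim x)
      have "\<bar>Y x powr t - m powr t\<bar> \<le> \<bar>Y x - m\<bar> powr t"
        using elim \<open>0 \<le> m\<close> t by (intro abs_powr_diff_le)
      then have "(Y x powr t - m powr t)\<^sup>2 \<le> (\<bar>Y x - m\<bar> powr t)\<^sup>2"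
        using power_mono[of _ _ 2] by fastforce
      also have "\<dots> = ((Y x - m)\<^sup>2) powr t"
        by (simp add: power2_eq_square powr_mult[symmetric])
      finally show ?case .
    qed
  qed
  also have "\<dots> \<le> expectation (\<lambda>x. (Y x - m)\<^sup>2) powr t"
    using dev_int t by (intro expectation_powr_le_powr_expectation) auto
  finally show ?thesis by (simp add: m_def)
qed

theorem theorem2p1:
  fixes M :: "'a measure" and X :: "'a \<Rightarrow> real" and r s :: real
  assumes "prob_space M"
    and "X \<in> borel_measurable M"
    and "AE x in M. X x \<ge> 0"
    and "integrable M (\<lambda>x. (X x)\<^sup>2)"
    and "0 < r" and "r < s" and "s \<le> 1"
  shows "prob_space.variance M (\<lambda>x. X x powr r) powr (1 / r)
           \<le> prob_space.variance M (\<lambda>x. X x powr s) powr (1 / s)"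
proof -
  interpret prob_space M by fact
  let ?Y = "\<lambda>x. X x powr s"
  have "integrable M (\<lambda>x. (?Y x)\<^sup>2)"
    using integrable_powr_of_square_integrable[OF assms(2-4), of "2 * s"] assms
    by (simp add: power2_eq_square flip: powr_add)
  then have "variance (\<lambda>x. ?Y x powr (r / s)) \<le> variance ?Y powr (r / s)"
    using assms by (intro variance_powr_le_powr_variance) auto
  moreover have "?Y x powr (r / s) = X x powr r" for x
    using assms by (simp add: powr_powr)
  ultimately have "variance (\<lambda>x. X x powr r) \<le> variance ?Y powr (r / s)"
    by simp
  then have "variance (\<lambda>x. X x powr r) powr (1 / r) \<le> (variance ?Y powr (r / s)) powr (1 / r)"
    using assms by (intro powr_mono2) auto
  also have "\<dots> = variance ?Y powr (1 / s)"
    using assms by (simp only: powr_powr) simp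
  finally show ?thesis .
qed

end
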